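(* Preferred semantics is serialisable with the selection function $\alpha_{adm}(X,Y,Z)=X\cup Y\cup Z$ and the termination function $\beta_{pr}(F,S)=1$ if $\mathrm{IS}(F)=\emptyset$ and $\beta_{pr}(F,S)=0$ otherwise.
   Context: An abstract argumentation framework (AF) is a pair $F=(A,R)$ with $A$ a finite subset of a fixed universal set of arguments $\mathfrak{A}$ and $R\subseteq A\times A$ ($a\to b$ means $(a,b)\in R$). For $S\subseteq A$: $S^+=\{a\mid \exists b\in S: b\to a\}$, $S^-=\{a\mid\exists b\in S: a\to b\}$; for sets $S,S'$, $S\to S'$ means $S^+\cap S'\neq\emptyset$. $S$ is admissible if it is conflict-free and every attacker of an element of $S$ is attacked by some element of $S$. A preferred extension is an inclusion-maximal admissible set. An initial set is a non-empty admissible set with no non-empty admissible proper subset; $\mathrm{IS}(F)$ is the set of initial sets. An initial set $S$ is unattacked if $S^-=\emptyset$; unchallenged if $S^-\neq\emptyset$ and no $S'\in\mathrm{IS}(F)$ has $S'\to S$; challenged if some $S'\in\mathrm{IS}(F)$ has $S'\to S$. Write $\mathrm{IS}^{u}(F),\mathrm{IS}^{uc}(F),\mathrm{IS}^{c}(F)$ for these sets. The reduct is $F^S=(A',R\cap(A'\times A'))$ with $A'=A\setminus(S\cup S^+)$. A selection function $\alpha$ maps any three sets $X,Y,Z$ of sets of arguments to a subset of $X\cup Y\cup Z$; a termination function $\beta$ maps pairs $(F,S)$ to $\{0,1\}$. Transitions: $(F,S)\to(F^{S'},S\cup S')$ whenever $S'\in\alpha(\mathrm{IS}^u(F),\mathrm{IS}^{uc}(F),\mathrm{IS}^c(F))$.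 $(F,S)\leadsto^{\alpha,\beta}(F',S')$ means $(F',S')$ is reachable from $(F,S)$ in finitely many (possibly zero) transitions and $\beta(F',S')=1$. $\mathcal{E}^{\alpha,\beta}(F)$ is the set of all $S$ with $(F,\emptyset)\leadsto^{\alpha,\beta}(F',S)$ for some $F'$. A semantics $\sigma$ is serialisable with $\alpha,\beta$ if $\sigma(F)=\mathcal{E}^{\alpha,\beta}(F)$ for all AFs $F$. *)

theory Defs
  imports Main
begin

type_synonym 'a af = "'a set \<times> ('a \<times> 'a) set"

definition wf_af :: "'a af \<Rightarrow> bool" where
  "wf_af F \<longleftrightarrow> finite (fst F) \<and> snd F \<subseteq> fst F \<times> fst F"

definition args :: "'a af \<Rightarrow> 'a set" where "args F = fst F"
definition atts :: "'a af \<Rightarrow> ('a \<times> 'a) set" where "atts F = snd F"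

definition attacked_by :: "'a af \<Rightarrow> 'a set \<Rightarrow> 'a set" where
  "attacked_by F S = {a. \<exists>b\<in>S. (b, a) \<in> atts F}"

definition attackers_of :: "'a af \<Rightarrow> 'a set \<Rightarrow> 'a set" where
  "attackers_of F S = {a. \<exists>b\<in>S. (a, b) \<in> atts F}"

definition set_attacks :: "'a af \<Rightarrow> 'a set \<Rightarrow> 'a set \<Rightarrow> bool" where
  "set_attacks F S S' \<longleftrightarrow> attacked_by F S \<inter> S' \<noteq> {}"

definition conflict_free :: "'a af \<Rightarrow> 'a set \<Rightarrow> bool" where
  "conflict_free F S \<longleftrightarrow> (\<forall>a\<in>S. \<forall>b\<in>S. (a, b) \<notin> atts F)"

definition admissible :: "'a af \<Rightarrow> 'a set \<Rightarrow> bool" where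
  "admissible F S \<longleftrightarrow> S \<subseteq> args F \<and> conflict_free F S \<and>
     (\<forall>a\<in>S. \<forall>b. (b, a) \<in> atts F \<longrightarrow> (\<exists>c\<in>S. (c, b) \<in> atts F))"

definition preferred :: "'a af \<Rightarrow> 'a set set" where
  "preferred F = {S. admissible F S \<and> (\<forall>T. admissible F T \<and> S \<subseteq> T \<longrightarrow> T = S)}"

definition initial_sets :: "'a af \<Rightarrow> 'a set set" where
  "initial_sets F = {S. S \<noteq> {} \<and> admissible F S \<and>
       (\<forall>T. T \<subset> S \<and> T \<noteq> {} \<longrightarrow> \<not> admissible F T)}"

definition IS_u :: "'a af \<Rightarrow> 'a set set" where
  "IS_u F = {S \<in> initial_sets F. attackers_of F S = {}}"

definition IS_uc :: "'a af \<Rightarrow> 'a set set" where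
  "IS_uc F = {S \<in> initial_sets F. attackers_of F S \<noteq> {} \<and>
       \<not> (\<exists>S'\<in>initial_sets F. set_attacks F S' S)}"

definition IS_c :: "'a af \<Rightarrow> 'a set set" where
  "IS_c F = {S \<in> initial_sets F. \<exists>S'\<in>initial_sets F. set_attacks F S' S}"

definition reduct :: "'a af \<Rightarrow> 'a set \<Rightarrow> 'a af" where
  "reduct F S = (let A' = args F - (S \<union> attacked_by F S)
                 in (A', atts F \<inter> (A' \<times> A')))"

(* Selection function: maps three sets of sets of arguments to a subset of their union.
   Termination function: AF and set to bool, True encodes 1. *)

type_synonym 'a selfun = "'a set set \<Rightarrow> 'a set set \<Rightarrow> 'a set set \<Rightarrow> 'a set set"
type_synonym 'a termfun = "'a af \<Rightarrow> 'a set \<Rightarrow> bool"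

definition is_selection :: "'a selfun \<Rightarrow> bool" where
  "is_selection \<alpha> \<longleftrightarrow> (\<forall>X Y Z. \<alpha> X Y Z \<subseteq> X \<union> Y \<union> Z)"

definition trans_step :: "'a selfun \<Rightarrow> ('a af \<times> 'a set) \<Rightarrow> ('a af \<times> 'a set) \<Rightarrow> bool" where
  "trans_step \<alpha> st st' \<longleftrightarrow> (\<exists>S'. S' \<in> \<alpha> (IS_u (fst st)) (IS_uc (fst st)) (IS_c (fst st)) \<and>
        st' = (reduct (fst st) S', snd st \<union> S'))"

definition leadsto :: "'a selfun \<Rightarrow> 'a termfun \<Rightarrow> ('a af \<times> 'a set) \<Rightarrow> ('a af \<times> 'a set) \<Rightarrow> bool" where
  "leadsto \<alpha> \<beta> st st' \<longleftrightarrow> (trans_step \<alpha>)\<^sup>*\<^sup>* st st' \<and> \<beta> (fst st') (snd st')"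

definition serial_ext :: "'a selfun \<Rightarrow> 'a termfun \<Rightarrow> 'a af \<Rightarrow> 'a set set" where
  "serial_ext \<alpha> \<beta> F = {S. \<exists>F'. leadsto \<alpha> \<beta> (F, {}) (F', S)}"

definition serialisable :: "('a af \<Rightarrow> 'a set set) \<Rightarrow> 'a selfun \<Rightarrow> 'a termfun \<Rightarrow> bool" where
  "serialisable \<sigma> \<alpha> \<beta> \<longleftrightarrow> (\<forall>F. wf_af F \<longrightarrow> \<sigma> F = serial_ext \<alpha> \<beta> F)"

definition alpha_adm :: "'a selfun" where
  "alpha_adm X Y Z = X \<union> Y \<union> Z"

definition beta_pr :: "'a termfun" where
  "beta_pr F S \<longleftrightarrow> initial_sets F = {}"

end

theory Submission
  imports Defs
begin

(* Admissible sets can be built up step by step through reducts: if S is admissible in F and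
   T is admissible in the reduct F^S, then S \<union> T is admissible in F; conversely, for admissible
   S \<subseteq> E the difference E - S is admissible in F^S.  By finiteness every nonempty admissible set
   contains an initial set, so the states reachable from (F, {}) by adding initial sets of the
   current reduct are exactly the pairs (F^S, S) with S admissible, and such an S is maximal
   admissible precisely when F^S has no initial set left. *)

lemma reduct_args: "args (reduct F S) = args F - (S \<union> attacked_by F S)"
  by (simp add: reduct_def args_def Let_def)

lemma reduct_atts: "atts (reduct F S) = atts F \<inter> (args (reduct F S) \<times> args (reduct F S))"
  by (simp add: reduct_def args_def atts_def Let_def)

lemma af_eqI: "args F = args G \<Longrightarrow> atts F = atts G \<Longrightarrow> F = G"
  by (simp add: args_def atts_def prod_eq_iff)

lemma wf_af_atts_subset: "wf_af F \<Longrightarrow> atts F \<subseteq> args F \<times> args F"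
  by (simp add: wf_af_def args_def atts_def)

lemma reduct_empty: "wf_af F \<Longrightarrow> reduct F {} = F"
  by (intro af_eqI) (auto simp: reduct_args reduct_atts attacked_by_def dest: wf_af_atts_subset)

lemma reduct_reduct:
  assumes "T \<subseteq> args (reduct F S)"
  shows "reduct (reduct F S) T = reduct F (S \<union> T)"
proof -
  have "args (reduct (reduct F S) T) = args (reduct F (S \<union> T))"
    using assms by (auto simp: reduct_args attacked_by_def reduct_atts; blast)
  then show ?thesis
    by (intro af_eqI) (auto simp: reduct_atts reduct_args)
qed

lemma admissible_empty [simp]: "admissible F {}"
  by (simp add: admissible_def conflict_free_def)

lemma admissible_finite: "wf_af F \<Longrightarrow> admissible F S \<Longrightarrow> finite S"
  by (auto simp: wf_af_def admissible_def args_def intro: finite_subset)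

lemma admissible_union_reduct:
  assumes wf: "wf_af F" and S: "admissible F S" and T: "admissible (reduct F S) T"
  shows "admissible F (S \<union> T)"
proof -
  have T_in: "T \<subseteq> args F - (S \<union> attacked_by F S)"
    using T by (simp add: admissible_def reduct_args)
  have "conflict_free F (S \<union> T)"
    using S T T_in unfolding admissible_def conflict_free_def attacked_by_def reduct_atts
    by blast
  \<comment> \<open>an attacker of T cannot lie in S (T avoids S^+); it is either attacked by S or survives
     in the reduct, where T defends against it\<close>
  moreover have "\<exists>c\<in>S \<union> T. (c, b) \<in> atts F" if "a \<in> S \<union> T" "(b, a) \<in> atts F" for a b
    using S T T_in wf_af_atts_subset[OF wf] that
    unfolding admissible_def attacked_by_def reduct_atts reduct_args
    by blast
  ultimately show ?thesis
    using S T_in by (auto simp: admissible_def)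
qed

lemma admissible_reduct_diff:
  assumes S: "admissible F S" and E: "admissible F E" and "S \<subseteq> E"
  shows "admissible (reduct F S) (E - S)"
proof -
  have "E - S \<subseteq> args (reduct F S)"
    using S E \<open>S \<subseteq> E\<close> by (auto simp: admissible_def conflict_free_def reduct_args attacked_by_def)
  then show ?thesis
    using E unfolding admissible_def conflict_free_def reduct_atts
    by (auto simp: reduct_args attacked_by_def; blast)
qed

lemma admissible_contains_initial_set:
  "finite S \<Longrightarrow> S \<noteq> {} \<Longrightarrow> admissible F S \<Longrightarrow> \<exists>T\<subseteq>S. T \<in> initial_sets F"
proof (induction S rule: finite_psubset_induct)
  case (psubset S)
  show ?case
  proof (cases "S \<in> initial_sets F")
    case False
    then obtain T where "T \<subset> S" "T \<noteq> {}" "admissible F T"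
      using psubset.prems by (auto simp: initial_sets_def)
    with psubset.IH[of T] show ?thesis by blast
  qed blast
qed

lemma initial_sets_reduct_empty_iff_preferred:
  assumes wf: "wf_af F" and S: "admissible F S"
  shows "initial_sets (reduct F S) = {} \<longleftrightarrow> S \<in> preferred F"
proof
  assume none: "initial_sets (reduct F S) = {}"
  have "T = S" if T: "admissible F T" "S \<subseteq> T" for T
  proof (rule ccontr)
    assume "T \<noteq> S"
    moreover have "admissible (reduct F S) (T - S)"
      using admissible_reduct_diff[OF S T] .
    ultimately show False
      using admissible_contains_initial_set[of "T - S"] admissible_finite[OF wf T(1)] T(2) none
      by blast
  qed
  with S show "S \<in> preferred F" by (simp add: preferred_def)
next
  assume pref: "S \<in> preferred F"
  show "initial_sets (reduct F S) = {}"
  proof (rule ccontr)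
    assume "initial_sets (reduct F S) \<noteq> {}"
    then obtain T where T: "admissible (reduct F S) T" "T \<noteq> {}"
      by (auto simp: initial_sets_def)
    then have "S \<union> T = S"
      using admissible_union_reduct[OF wf S] pref by (auto simp: preferred_def)
    moreover have "S \<inter> T = {}"
      using T by (auto simp: admissible_def reduct_args)
    ultimately show False using T by blast
  qed
qed

lemma alpha_adm_initial_sets: "alpha_adm (IS_u F) (IS_uc F) (IS_c F) = initial_sets F"
  by (auto simp: alpha_adm_def IS_u_def IS_uc_def IS_c_def)

lemma trans_step_alpha_adm_iff:
  "trans_step alpha_adm st st' \<longleftrightarrow>
     (\<exists>T\<in>initial_sets (fst st). st' = (reduct (fst st) T, snd st \<union> T))"
  by (auto simp: trans_step_def alpha_adm_initial_sets)

lemma reachable_imp_admissible: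
  assumes "(trans_step alpha_adm)\<^sup>*\<^sup>* (F, {}) st" and wf: "wf_af F"
  shows "\<exists>S. admissible F S \<and> st = (reduct F S, S)"
  using assms(1)
proof (induction rule: rtranclp_induct)
  case base
  show ?case using reduct_empty[OF wf] by auto
next
  case (step st st')
  then obtain S T where S: "admissible F S" "st = (reduct F S, S)"
    and T: "T \<in> initial_sets (reduct F S)" and st': "st' = (reduct (reduct F S) T, S \<union> T)"
    by (auto simp: trans_step_alpha_adm_iff)
  then have T_adm: "admissible (reduct F S) T" by (simp add: initial_sets_def)
  then have "T \<subseteq> args (reduct F S)" by (simp add: admissible_def)
  with st' have "st' = (reduct F (S \<union> T), S \<union> T)" by (simp add: reduct_reduct)
  with admissible_union_reduct[OF wf S(1) T_adm] show ?case by blast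
qed

lemma reachable_admissible_superset:
  assumes wf: "wf_af F" and E: "admissible F E"
  shows "admissible F S \<Longrightarrow> S \<subseteq> E \<Longrightarrow> (trans_step alpha_adm)\<^sup>*\<^sup>* (reduct F S, S) (reduct F E, E)"
proof (induction "card (E - S)" arbitrary: S rule: less_induct)
  case less
  show ?case
  proof (cases "S = E")
    case False
    have "finite (E - S)" "E - S \<noteq> {}"
      using admissible_finite[OF wf E] False less.prems(2) by auto
    then obtain T where T: "T \<subseteq> E - S" "T \<in> initial_sets (reduct F S)"
      using admissible_contains_initial_set admissible_reduct_diff[OF less.prems(1) E less.prems(2)]
      by blast
    then have T_adm: "admissible (reduct F S) T" and "T \<noteq> {}"
      by (auto simp: initial_sets_def)
    then have "T \<subseteq> args (reduct F S)" by (simp add: admissible_def)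
    with T have "trans_step alpha_adm (reduct F S, S) (reduct F (S \<union> T), S \<union> T)"
      by (auto simp: trans_step_alpha_adm_iff reduct_reduct intro!: bexI[of _ T])
    moreover have "(trans_step alpha_adm)\<^sup>*\<^sup>* (reduct F (S \<union> T), S \<union> T) (reduct F E, E)"
    proof (rule less.hyps)
      show "card (E - (S \<union> T)) < card (E - S)"
        using T \<open>T \<noteq> {}\<close> \<open>finite (E - S)\<close> by (intro psubset_card_mono) auto
    qed (use T admissible_union_reduct[OF wf less.prems(1) T_adm] less.prems(2) in auto)
    ultimately show ?thesis by (rule converse_rtranclp_into_rtranclp)
  qed simp
qed

lemma reachable_iff_admissible:
  assumes wf: "wf_af F"
  shows "(trans_step alpha_adm)\<^sup>*\<^sup>* (F, {}) st \<longleftrightarrow> (\<exists>S. admissible F S \<and> st = (reduct F S, S))"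
proof
  show "\<exists>S. admissible F S \<and> st = (reduct F S, S)" if "(trans_step alpha_adm)\<^sup>*\<^sup>* (F, {}) st"
    using reachable_imp_admissible[OF that wf] .
  show "(trans_step alpha_adm)\<^sup>*\<^sup>* (F, {}) st" if "\<exists>S. admissible F S \<and> st = (reduct F S, S)"
    using that reachable_admissible_superset[OF wf, of _ "{}"] by (auto simp: reduct_empty[OF wf])
qed

theorem theorem6:
  shows "serialisable (preferred :: 'a af \<Rightarrow> 'a set set) alpha_adm beta_pr"
  unfolding serialisable_def
proof (intro allI impI)
  fix F :: "'a af"
  assume wf: "wf_af F"
  have "S \<in> serial_ext alpha_adm beta_pr F \<longleftrightarrow>
          admissible F S \<and> initial_sets (reduct F S) = {}" for S
    using reachable_iff_admissible[OF wf]
    by (auto simp: serial_ext_def leadsto_def beta_pr_def)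
  moreover have "S \<in> preferred F \<Longrightarrow> admissible F S" for S
    by (simp add: preferred_def)
  ultimately show "preferred F = serial_ext alpha_adm beta_pr F"
    using initial_sets_reduct_empty_iff_preferred[OF wf] by blast
qed

end
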